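(* Let $f:\mathbb{R}^n\to\mathbb{R}$ be twice differentiable with $\mu I\preceq \nabla^2 f(x)\preceq L I$ for all $x$ (where $0<\mu\le L$), and strongly self-concordant with constant $M\ge 0$. Let $\kappa=L/\mu$. Run the SR1 method with correction strategy: choose $x_0\in\mathbb{R}^n$, set $G_0=L\cdot I$, $r_{-1}=0$, and for $k=0,1,2,\dots$ set $x_{k+1}=x_k-G_k^{-1}\nabla f(x_k)$, $u_k=x_{k+1}-x_k$, $r_k=\|u_k\|_{x_k}$, $\widetilde G_k=\left(1+\frac{Mr_{k-1}}{2}\right)\left(1+\frac{Mr_k}{2}\right)G_k$, $J_k=\int_0^1\nabla^2 f(x_k+tu_k)\,dt$, and $G_{k+1}=\mathrm{SR1}(J_k,\widetilde G_k,u_k)$. Suppose $M\lambda_f(x_0)\le\frac{\ln(3/2)}{4\kappa}$. Then for all $k\ge0$, $$J_k\preceq\widetilde G_k\quad\text{and}\quad G_k\preceq 3\kappa\cdot\nabla^2 f(x_k).$$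
   Context: $f$ is strongly self-concordant with constant $M\ge0$ if $\nabla^2 f(y)-\nabla^2 f(x)\preceq M\|y-x\|_z\nabla^2 f(w)$ for all $x,y,z,w\in\mathbb{R}^n$, where $\|u\|_x=\sqrt{u^\top\nabla^2 f(x)u}$. $\lambda_f(x)=\langle\nabla f(x),[\nabla^2 f(x)]^{-1}\nabla f(x)\rangle^{1/2}$. For symmetric positive definite $A,G$ and $u\neq 0$, $\mathrm{SR1}(A,G,u)=G$ if $(G-A)u=0$, and otherwise $\mathrm{SR1}(A,G,u)=G-\frac{(G-A)uu^\top(G-A)}{u^\top(G-A)u}$. *)

theory Defs
  imports "HOL-Analysis.Analysis"
begin

definition loewner_le :: "real^'n^'n \<Rightarrow> real^'n^'n \<Rightarrow> bool" where
  "loewner_le A B \<longleftrightarrow> (\<forall>v. v \<bullet> (A *v v) \<le> v \<bullet> (B *v v))"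

definition local_norm :: "(real^'n \<Rightarrow> real^'n^'n) \<Rightarrow> real^'n \<Rightarrow> real^'n \<Rightarrow> real" where
  "local_norm H x u = sqrt (u \<bullet> (H x *v u))"

definition strongly_self_concordant :: "(real^'n \<Rightarrow> real^'n^'n) \<Rightarrow> real \<Rightarrow> bool" where
  "strongly_self_concordant H M \<longleftrightarrow>
     (\<forall>x y z w. loewner_le (H y - H x) ((M * local_norm H z (y - x)) *\<^sub>R H w))"

definition newton_decrement :: "(real^'n \<Rightarrow> real^'n) \<Rightarrow> (real^'n \<Rightarrow> real^'n^'n) \<Rightarrow> real^'n \<Rightarrow> real" where
  "newton_decrement g H x = sqrt (g x \<bullet> (matrix_inv (H x) *v g x))"

definition outer_prod :: "real^'n \<Rightarrow> real^'n \<Rightarrow> real^'n^'n" where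
  "outer_prod a b = (\<chi> i j. a $ i * b $ j)"

definition SR1 :: "real^'n^'n \<Rightarrow> real^'n^'n \<Rightarrow> real^'n \<Rightarrow> real^'n^'n" where
  "SR1 A G u = (if (G - A) *v u = 0 then G
      else G - (1 / (u \<bullet> ((G - A) *v u))) *\<^sub>R outer_prod ((G - A) *v u) (u v* (G - A)))"

end

theory Submission
  imports Defs
begin

text \<open>Along the iteration \<open>G\<^sub>k\<close> remains a symmetric upper approximation of the Hessian,
  \<open>\<nabla>\<^sup>2f(x\<^sub>k) \<preceq> (1 + M r\<^sub>k\<^sub>-\<^sub>1 / 2) G\<^sub>k\<close>, and \<open>G\<^sub>k \<preceq> P\<^sub>k L I\<close>, where \<open>P\<^sub>k\<close> is the product of all
  correction factors used so far. Strong self-concordance gives \<open>J\<^sub>k \<preceq> (1 + M r\<^sub>k / 2) \<nabla>\<^sup>2f(x\<^sub>k)\<close>,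
  so the corrected matrix \<open>Gt\<^sub>k\<close> dominates \<open>J\<^sub>k\<close>, and the SR1 update keeps
  \<open>J\<^sub>k \<preceq> G\<^sub>k\<^sub>+\<^sub>1 \<preceq> Gt\<^sub>k\<close>, which propagates both bounds. While \<open>P\<^sub>k \<le> 3\<close>, the second bound gives
  \<open>G\<^sub>k \<preceq> 3\<kappa> \<nabla>\<^sup>2f(x\<^sub>k)\<close>, so the step is a quasi-Newton step of relative accuracy \<open>\<theta> < 1\<close> for
  \<open>J\<^sub>k\<close> and the Newton decrement contracts: \<open>M \<lambda>\<^sub>k \<le> M \<lambda>\<^sub>0 (1 - 1 / (4\<kappa>))\<^sup>k\<close>. Then \<open>M r\<^sub>k\<close>
  decays geometrically as well, and the initial condition keeps the sum of all \<open>M r\<^sub>k\<close> below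
  \<open>ln 3\<close>, that is \<open>P\<^sub>k \<le> 3\<close>.\<close>

section \<open>Quadratic forms of symmetric matrices\<close>

declare scaleR_matrix_vector_assoc [symmetric, simp]

lemma transpose_add: "transpose (A + B) = transpose A + transpose (B :: 'a::semiring_1^'n^'m)"
  by (simp add: transpose_def vec_eq_iff)

lemma transpose_diff: "transpose (A - B) = transpose A - transpose (B :: 'a::ring_1^'n^'m)"
  by (simp add: transpose_def vec_eq_iff)

lemma matrix_vector_mult_uminus_right: "(A :: 'a::ring_1^'n^'m) *v (- x) = - (A *v x)"
  by (simp add: matrix_vector_mult_def vec_eq_iff sum_negf)

lemma quadratic_form_diff: "v \<bullet> ((A - B) *v v) = v \<bullet> (A *v v) - v \<bullet> ((B :: real^'n^'n) *v v)"
  by (simp add: matrix_vector_mult_diff_rdistrib inner_diff_right)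

lemma inner_axis_matrix_vector_axis: "axis i 1 \<bullet> ((A :: real^'n^'n) *v axis j 1) = A $ i $ j"
  by (simp add: matrix_vector_mult_basis inner_commute[of "axis i 1"] inner_axis column_def)

lemma inner_matrix_vector_symmetric:
  fixes A :: "real^'n^'n"
  assumes "transpose A = A"
  shows "x \<bullet> (A *v y) = (A *v x) \<bullet> y"
  by (metis assms dot_lmul_matrix vector_transpose_matrix)

lemma quadratic_nonneg_imp_discriminant_le:
  fixes a b c :: real
  assumes nonneg: "\<And>t. 0 \<le> a + 2 * t * b + t\<^sup>2 * c" and "0 \<le> c"
  shows "b\<^sup>2 \<le> a * c"
proof (cases "c = 0")
  case True
  show ?thesis
  proof (rule ccontr)
    assume "\<not> ?thesis"
    then have "b \<noteq> 0" using True by simp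
    then show False
      using nonneg[of "- (a + 1) / (2 * b)"] True by (simp add: field_simps)
  qed
next
  case False
  then have "c > 0" using assms(2) by simp
  then show ?thesis
    using nonneg[of "- b / c"] by (simp add: field_simps power2_eq_square)
qed

lemma psd_Cauchy_Schwarz:
  fixes S :: "real^'n^'n"
  assumes sym: "transpose S = S" and psd: "\<And>v. 0 \<le> v \<bullet> (S *v v)"
  shows "(x \<bullet> (S *v y))\<^sup>2 \<le> (x \<bullet> (S *v x)) * (y \<bullet> (S *v y))"
proof (rule quadratic_nonneg_imp_discriminant_le)
  fix t
  have "y \<bullet> (S *v x) = x \<bullet> (S *v y)"
    using inner_matrix_vector_symmetric[OF sym, of y x] by (simp add: inner_commute)
  then have "(x + t *\<^sub>R y) \<bullet> (S *v (x + t *\<^sub>R y))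
      = x \<bullet> (S *v x) + 2 * t * (x \<bullet> (S *v y)) + t\<^sup>2 * (y \<bullet> (S *v y))"
    by (simp add: matrix_vector_right_distrib matrix_vector_mult_scaleR inner_add_left inner_add_right
        power2_eq_square algebra_simps)
  then show "0 \<le> x \<bullet> (S *v x) + 2 * t * (x \<bullet> (S *v y)) + t\<^sup>2 * (y \<bullet> (S *v y))"
    by (metis psd)
qed (rule psd)

lemma matrix_inv_right_left:
  fixes A :: "real^'n^'n"
  assumes "invertible A"
  shows "A ** matrix_inv A = mat 1" and "matrix_inv A ** A = mat 1"
proof -
  have "\<exists>A'. A ** A' = mat 1 \<and> A' ** A = mat 1"
    using assms unfolding invertible_def by blast
  then have "A ** matrix_inv A = mat 1 \<and> matrix_inv A ** A = mat 1"
    unfolding matrix_inv_def by (rule someI_ex)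
  then show "A ** matrix_inv A = mat 1" and "matrix_inv A ** A = mat 1" by auto
qed

lemma matrix_inv_vector:
  fixes A :: "real^'n^'n"
  assumes "invertible A"
  shows "A *v (matrix_inv A *v y) = y" and "matrix_inv A *v (A *v y) = y"
  using matrix_inv_right_left[OF assms] by (simp_all add: matrix_vector_mul_assoc)

lemma positive_definite_invertible:
  fixes A :: "real^'n^'n"
  assumes "m > 0" and "\<And>v. m * (v \<bullet> v) \<le> v \<bullet> (A *v v)"
  shows "invertible A"
proof -
  have "x = 0" if "A *v x = 0" for x
  proof -
    have "m * (x \<bullet> x) \<le> 0" using assms(2)[of x] that by simp
    then have "x \<bullet> x \<le> 0" using assms(1) by (simp add: mult_le_0_iff)
    then show "x = 0" by (metis antisym inner_ge_zero inner_eq_zero_iff)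
  qed
  then show ?thesis
    by (metis invertible_left_inverse matrix_left_invertible_ker)
qed

lemma quadratic_form_matrix_inv:
  fixes A :: "real^'n^'n"
  assumes "invertible A"
  shows "x \<bullet> (matrix_inv A *v x) = (matrix_inv A *v x) \<bullet> (A *v (matrix_inv A *v x))"
  by (simp add: matrix_inv_vector[OF assms] inner_commute)

lemma quadratic_form_matrix_inv_nonneg:
  fixes A :: "real^'n^'n"
  assumes "invertible A" and "\<And>v. 0 \<le> v \<bullet> (A *v v)"
  shows "0 \<le> x \<bullet> (matrix_inv A *v x)"
  unfolding quadratic_form_matrix_inv[OF assms(1)] by (rule assms(2))

lemma dual_Cauchy_Schwarz:
  fixes A :: "real^'n^'n"
  assumes sym: "transpose A = A" and inv: "invertible A" and psd: "\<And>v. 0 \<le> v \<bullet> (A *v v)"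
  shows "(u \<bullet> w)\<^sup>2 \<le> (u \<bullet> (A *v u)) * (w \<bullet> (matrix_inv A *v w))"
  using psd_Cauchy_Schwarz[OF sym psd, of u "matrix_inv A *v w"]
  by (simp add: matrix_inv_vector(1)[OF inv] inner_commute[of "matrix_inv A *v w" w])

lemma le_of_mult_self_le:
  fixes p b :: real
  assumes "p * p \<le> b * p" and "0 \<le> b"
  shows "p \<le> b"
proof (cases "p > 0")
  case True
  then show ?thesis using assms(1) by (rule mult_right_le_imp_le[rotated])
qed (use assms(2) in simp)

lemma quadratic_form_matrix_inv_antimono:
  fixes A B :: "real^'n^'n"
  assumes symA: "transpose A = A" and invA: "invertible A" and invB: "invertible B"
    and psdA: "\<And>v. 0 \<le> v \<bullet> (A *v v)" and le: "\<And>v. v \<bullet> (A *v v) \<le> \<gamma> * (v \<bullet> (B *v v))"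
    and "\<gamma> > 0"
  shows "x \<bullet> (matrix_inv B *v x) \<le> \<gamma> * (x \<bullet> (matrix_inv A *v x))"
proof -
  define z where "z = matrix_inv B *v x"
  define p where "p = x \<bullet> z"
  define q where "q = x \<bullet> (matrix_inv A *v x)"
  have p_eq: "p = z \<bullet> (B *v z)"
    by (simp add: p_def z_def matrix_inv_vector[OF invB] inner_commute)
  have q_nonneg: "0 \<le> q"
    unfolding q_def by (rule quadratic_form_matrix_inv_nonneg[OF invA psdA])
  have "p\<^sup>2 \<le> q * (z \<bullet> (A *v z))"
    using dual_Cauchy_Schwarz[OF symA invA psdA, of z x] by (simp add: p_def q_def inner_commute mult.commute)
  also have "\<dots> \<le> q * (\<gamma> * p)"
    using le[of z] p_eq q_nonneg by (simp add: mult_left_mono)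
  finally have "p * p \<le> (\<gamma> * q) * p" by (simp add: power2_eq_square algebra_simps)
  then have "p \<le> \<gamma> * q"
    by (rule le_of_mult_self_le) (use q_nonneg \<open>\<gamma> > 0\<close> in simp)
  then show ?thesis by (simp add: z_def p_def q_def)
qed

lemma quadratic_form_matrix_inv_image_le:
  fixes J X :: "real^'n^'n"
  assumes symJ: "transpose J = J" and symX: "transpose X = X" and invJ: "invertible J"
    and psdJ: "\<And>v. 0 \<le> v \<bullet> (J *v v)" and psdX: "\<And>v. 0 \<le> v \<bullet> (X *v v)"
    and le: "\<And>v. v \<bullet> (X *v v) \<le> c * (v \<bullet> (J *v v))" and "c \<ge> 0"
  shows "(X *v y) \<bullet> (matrix_inv J *v (X *v y)) \<le> c * (y \<bullet> (X *v y))"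
proof -
  define z where "z = matrix_inv J *v (X *v y)"
  define Q where "Q = (X *v y) \<bullet> z"
  have Q_J: "Q = z \<bullet> (J *v z)"
    by (simp add: Q_def z_def matrix_inv_vector[OF invJ] inner_commute)
  have Q_X: "Q = y \<bullet> (X *v z)"
    using inner_matrix_vector_symmetric[OF symX, of y z] by (simp add: Q_def)
  have "Q\<^sup>2 \<le> (y \<bullet> (X *v y)) * (z \<bullet> (X *v z))"
    unfolding Q_X by (rule psd_Cauchy_Schwarz[OF symX psdX])
  also have "\<dots> \<le> (y \<bullet> (X *v y)) * (c * Q)"
    using le[of z] psdX[of y] Q_J by (simp add: mult_left_mono)
  finally have "Q * Q \<le> (c * (y \<bullet> (X *v y))) * Q" by (simp add: power2_eq_square algebra_simps)
  then have "Q \<le> c * (y \<bullet> (X *v y))"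
    by (rule le_of_mult_self_le) (use psdX[of y] \<open>c \<ge> 0\<close> in simp)
  then show ?thesis by (simp add: Q_def z_def)
qed

lemma symmetric_matrix_entry_bound:
  fixes D :: "real^'n^'n"
  assumes symD: "transpose D = D" and bound: "\<And>v. \<bar>v \<bullet> (D *v v)\<bar> \<le> K * (v \<bullet> v)"
  shows "\<bar>D $ i $ j\<bar> \<le> 2 * K"
proof -
  define p where "p = axis i (1::real)"
  define q where "q = axis j (1::real)"
  have "q \<bullet> (D *v p) = p \<bullet> (D *v q)"
    using inner_matrix_vector_symmetric[OF symD, of q p] by (simp add: inner_commute)
  then have polarization: "4 * (p \<bullet> (D *v q)) = (p + q) \<bullet> (D *v (p + q)) - (p - q) \<bullet> (D *v (p - q))"
    by (simp add: matrix_vector_right_distrib matrix_vector_mult_diff_distrib inner_add_left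
        inner_add_right inner_diff_left inner_diff_right)
  have "norm (p + q) \<le> 2" and "norm (p - q) \<le> 2"
    using norm_triangle_ineq[of p q] norm_triangle_ineq4[of p q] by (simp_all add: p_def q_def)
  then have "(p + q) \<bullet> (p + q) \<le> 4" and "(p - q) \<bullet> (p - q) \<le> 4"
    by (simp_all add: norm_le_square)
  moreover have "0 \<le> K"
    using bound[of p] by (simp add: p_def)
  ultimately have "K * ((p + q) \<bullet> (p + q)) \<le> K * 4" and "K * ((p - q) \<bullet> (p - q)) \<le> K * 4"
    by (simp_all add: mult_left_mono)
  then have "\<bar>(p + q) \<bullet> (D *v (p + q))\<bar> \<le> 4 * K" and "\<bar>(p - q) \<bullet> (D *v (p - q))\<bar> \<le> 4 * K"
    using bound[of "p + q"] bound[of "p - q"] by linarith+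
  then have "\<bar>4 * (p \<bullet> (D *v q))\<bar> \<le> 8 * K"
    unfolding polarization by linarith
  then show ?thesis
    by (simp add: p_def q_def inner_axis_matrix_vector_axis)
qed

lemma inner_matrix_inv_symmetric_cancel:
  fixes J :: "real^'n^'n"
  assumes "transpose J = J" and "invertible J"
  shows "(J *v z) \<bullet> (matrix_inv J *v w) = z \<bullet> w"
  using inner_matrix_vector_symmetric[OF assms(1), of z "matrix_inv J *v w"]
  by (simp add: matrix_inv_vector[OF assms(2)])

text \<open>The matrix form of \<open>(t - p\<^sub>1)(p\<^sub>2 - t) \<ge> 0\<close>, i.e. of \<open>t\<^sup>2 \<le> (p\<^sub>1 + p\<^sub>2) t - p\<^sub>1 p\<^sub>2\<close>, for the
  spectrum of \<open>G\<close> relative to \<open>J\<close>.\<close>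

lemma quadratic_form_matrix_inv_sandwich:
  fixes J G :: "real^'n^'n"
  assumes symJ: "transpose J = J" and symG: "transpose G = G" and invJ: "invertible J"
    and psdJ: "\<And>v. 0 \<le> v \<bullet> (J *v v)" and "p\<^sub>1 \<le> p\<^sub>2"
    and lower: "\<And>v. p\<^sub>1 * (v \<bullet> (J *v v)) \<le> v \<bullet> (G *v v)"
    and upper: "\<And>v. v \<bullet> (G *v v) \<le> p\<^sub>2 * (v \<bullet> (J *v v))"
  shows "(G *v z) \<bullet> (matrix_inv J *v (G *v z))
    \<le> (p\<^sub>1 + p\<^sub>2) * (z \<bullet> (G *v z)) - p\<^sub>1 * p\<^sub>2 * (z \<bullet> (J *v z))"
proof -
  define X where "X = G - p\<^sub>1 *\<^sub>R J"
  have Xv: "X *v v = G *v v - p\<^sub>1 *\<^sub>R (J *v v)" for v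
    by (simp add: X_def matrix_vector_mult_diff_rdistrib)
  have symX: "transpose X = X"
    by (simp add: X_def transpose_diff transpose_scalar symG symJ)
  have psdX: "0 \<le> v \<bullet> (X *v v)" for v
    using lower[of v] by (simp add: Xv inner_diff_right)
  have X_le: "v \<bullet> (X *v v) \<le> (p\<^sub>2 - p\<^sub>1) * (v \<bullet> (J *v v))" for v
    using upper[of v] by (simp add: Xv inner_diff_right algebra_simps)
  have key: "(X *v z) \<bullet> (matrix_inv J *v (X *v z)) \<le> (p\<^sub>2 - p\<^sub>1) * (z \<bullet> (X *v z))"
    using quadratic_form_matrix_inv_image_le[OF symJ symX invJ psdJ psdX X_le] \<open>p\<^sub>1 \<le> p\<^sub>2\<close>
    by simp
  note cross = inner_matrix_inv_symmetric_cancel[OF symJ invJ, of z "G *v z"]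
  have "(X *v z) \<bullet> (matrix_inv J *v (X *v z)) = (G *v z) \<bullet> (matrix_inv J *v (G *v z))
      - 2 * p\<^sub>1 * (z \<bullet> (G *v z)) + p\<^sub>1\<^sup>2 * (z \<bullet> (J *v z))"
    using cross
    by (simp add: Xv matrix_vector_mult_diff_distrib matrix_vector_mult_scaleR inner_diff_left
        inner_diff_right matrix_inv_vector[OF invJ] power2_eq_square algebra_simps inner_commute)
  moreover have "z \<bullet> (X *v z) = z \<bullet> (G *v z) - p\<^sub>1 * (z \<bullet> (J *v z))"
    by (simp add: Xv inner_diff_right)
  ultimately have "(G *v z) \<bullet> (matrix_inv J *v (G *v z)) - 2 * p\<^sub>1 * (z \<bullet> (G *v z))
      + p\<^sub>1\<^sup>2 * (z \<bullet> (J *v z)) \<le> (p\<^sub>2 - p\<^sub>1) * (z \<bullet> (G *v z) - p\<^sub>1 * (z \<bullet> (J *v z)))"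
    using key by simp
  then show ?thesis
    by (simp add: power2_eq_square algebra_simps)
qed

text \<open>If \<open>G\<close> approximates \<open>J\<close> within relative accuracy \<open>\<theta>\<close>, the quasi-Newton step with \<open>G\<close> reduces
  the \<open>J\<^sup>-\<^sup>1\<close>-norm of the gradient of the quadratic model with Hessian \<open>J\<close> by the factor \<open>\<theta>\<close>.\<close>

lemma dual_norm_residual_contraction:
  fixes J G :: "real^'n^'n"
  assumes symJ: "transpose J = J" and symG: "transpose G = G" and invJ: "invertible J"
    and psdJ: "\<And>v. 0 \<le> v \<bullet> (J *v v)" and "0 \<le> \<theta>" "\<theta> < 1"
    and lower: "\<And>v. v \<bullet> (J *v v) \<le> (1 + \<theta>) * (v \<bullet> (G *v v))"
    and upper: "\<And>v. (1 - \<theta>) * (v \<bullet> (G *v v)) \<le> v \<bullet> (J *v v)"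
  shows "(G *v z - J *v z) \<bullet> (matrix_inv J *v (G *v z - J *v z))
    \<le> \<theta>\<^sup>2 * ((G *v z) \<bullet> (matrix_inv J *v (G *v z)))"
proof -
  define A where "A = (G *v z) \<bullet> (matrix_inv J *v (G *v z))"
  define B where "B = z \<bullet> (G *v z)"
  define C where "C = z \<bullet> (J *v z)"
  define p\<^sub>1 where "p\<^sub>1 = 1 / (1 + \<theta>)"
  define p\<^sub>2 where "p\<^sub>2 = 1 / (1 - \<theta>)"
  define s where "s = 1 - \<theta>\<^sup>2"
  have "A \<le> (p\<^sub>1 + p\<^sub>2) * B - p\<^sub>1 * p\<^sub>2 * C"
    unfolding A_def B_def C_def
  proof (rule quadratic_form_matrix_inv_sandwich[OF symJ symG invJ psdJ])
    show "p\<^sub>1 \<le> p\<^sub>2"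
      using \<open>0 \<le> \<theta>\<close> \<open>\<theta> < 1\<close> by (simp add: p\<^sub>1_def p\<^sub>2_def frac_le)
    show "p\<^sub>1 * (v \<bullet> (J *v v)) \<le> v \<bullet> (G *v v)" for v
      using lower[of v] \<open>0 \<le> \<theta>\<close> by (simp add: p\<^sub>1_def field_simps)
    show "v \<bullet> (G *v v) \<le> p\<^sub>2 * (v \<bullet> (J *v v))" for v
      using upper[of v] \<open>\<theta> < 1\<close> by (simp add: p\<^sub>2_def field_simps)
  qed
  moreover have "0 \<le> s"
    using \<open>0 \<le> \<theta>\<close> \<open>\<theta> < 1\<close> by (simp add: s_def power2_eq_square mult_le_one)
  ultimately have "s * A \<le> s * ((p\<^sub>1 + p\<^sub>2) * B - p\<^sub>1 * p\<^sub>2 * C)"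
    by (rule mult_left_mono)
  also have "\<dots> = (s * p\<^sub>1 + s * p\<^sub>2) * B - (s * p\<^sub>1 * p\<^sub>2) * C"
    by (simp add: algebra_simps)
  also have "\<dots> = 2 * B - C"
  proof -
    have "\<theta> * \<theta> < 1"
      using \<open>0 \<le> \<theta>\<close> \<open>\<theta> < 1\<close> mult_strict_mono[of \<theta> 1 \<theta> 1] by simp
    then have "s * p\<^sub>1 = 1 - \<theta>" "s * p\<^sub>2 = 1 + \<theta>" "s * p\<^sub>1 * p\<^sub>2 = 1"
      using \<open>0 \<le> \<theta>\<close> \<open>\<theta> < 1\<close>
      by (simp_all add: s_def p\<^sub>1_def p\<^sub>2_def field_simps power2_eq_square)
    then show ?thesis by simp
  qed
  finally have "(1 - \<theta>\<^sup>2) * A \<le> 2 * B - C" by (simp add: s_def)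
  moreover have "(G *v z - J *v z) \<bullet> (matrix_inv J *v (G *v z - J *v z)) = A - 2 * B + C"
    using inner_matrix_inv_symmetric_cancel[OF symJ invJ, of z "G *v z"]
    by (simp add: A_def B_def C_def matrix_vector_mult_diff_distrib inner_diff_left inner_diff_right
        matrix_inv_vector[OF invJ] inner_commute)
  ultimately show ?thesis
    by (simp add: A_def left_diff_distrib)
qed

lemma quasi_Newton_step_norm_le:
  fixes A G :: "real^'n^'n"
  assumes symA: "transpose A = A" and invA: "invertible A" and psdA: "\<And>v. 0 \<le> v \<bullet> (A *v v)"
    and le: "\<And>v. v \<bullet> (A *v v) \<le> c * (v \<bullet> (G *v v))" and "0 \<le> c" and step: "G *v d = - w"
  shows "sqrt (d \<bullet> (A *v d)) \<le> c * sqrt (w \<bullet> (matrix_inv A *v w))"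
proof -
  define a where "a = sqrt (d \<bullet> (A *v d))"
  define l where "l = sqrt (w \<bullet> (matrix_inv A *v w))"
  have "\<bar>d \<bullet> w\<bar> \<le> a * l"
    using dual_Cauchy_Schwarz[OF symA invA psdA, of d w]
    by (simp add: a_def l_def real_le_rsqrt real_sqrt_mult[symmetric])
  have "a * a = d \<bullet> (A *v d)" using psdA[of d] by (simp add: a_def)
  also have "\<dots> \<le> c * (- (d \<bullet> w))" using le[of d] by (simp add: step)
  also have "\<dots> \<le> c * (a * l)" using \<open>\<bar>d \<bullet> w\<bar> \<le> a * l\<close> \<open>0 \<le> c\<close> by (intro mult_left_mono) auto
  finally have "a * a \<le> (c * l) * a" by (simp add: algebra_simps)
  then show ?thesis
    unfolding a_def[symmetric] l_def[symmetric] by (rule le_of_mult_self_le)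
      (simp add: l_def \<open>0 \<le> c\<close> quadratic_form_matrix_inv_nonneg[OF invA psdA])
qed

section \<open>The symmetric rank-one update\<close>

lemma outer_prod_mult_vector: "outer_prod w w *v v = (w \<bullet> v) *\<^sub>R w"
  by (simp add: outer_prod_def matrix_vector_mult_def inner_vec_def vec_eq_iff sum_distrib_left
      algebra_simps)

lemma transpose_outer_prod: "transpose (outer_prod w w) = outer_prod w w"
  by (simp add: outer_prod_def transpose_def vec_eq_iff mult.commute)

lemma psd_quadratic_form_pos:
  fixes D :: "real^'n^'n"
  assumes symD: "transpose D = D" and psdD: "\<And>v. 0 \<le> v \<bullet> (D *v v)" and "D *v u \<noteq> 0"
  shows "0 < u \<bullet> (D *v u)"
proof (rule ccontr)
  assume "\<not> 0 < u \<bullet> (D *v u)"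
  then have "u \<bullet> (D *v u) = 0" using psdD[of u] by simp
  then have "((D *v u) \<bullet> (D *v u))\<^sup>2 \<le> 0"
    using psd_Cauchy_Schwarz[OF symD psdD, of "D *v u" u] by simp
  then show False using \<open>D *v u \<noteq> 0\<close> by simp
qed

lemma SR1_between:
  fixes A G :: "real^'n^'n"
  assumes symA: "transpose A = A" and symG: "transpose G = G"
    and le: "\<And>v. v \<bullet> (A *v v) \<le> v \<bullet> (G *v v)"
  shows "transpose (SR1 A G u) = SR1 A G u"
    and "v \<bullet> (A *v v) \<le> v \<bullet> (SR1 A G u *v v)"
    and "v \<bullet> (SR1 A G u *v v) \<le> v \<bullet> (G *v v)"
proof -
  define D where "D = G - A"
  define w where "w = D *v u"
  define c where "c = u \<bullet> w"
  have symD: "transpose D = D" by (simp add: D_def transpose_diff symA symG)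
  have psdD: "0 \<le> v \<bullet> (D *v v)" for v
    using le[of v] by (simp add: D_def quadratic_form_diff)
  have "transpose (SR1 A G u) = SR1 A G u \<and> v \<bullet> (A *v v) \<le> v \<bullet> (SR1 A G u *v v)
      \<and> v \<bullet> (SR1 A G u *v v) \<le> v \<bullet> (G *v v)"
  proof (cases "w = 0")
    case True
    then have "SR1 A G u = G" by (simp add: SR1_def D_def[symmetric] w_def[symmetric])
    then show ?thesis using symG le by simp
  next
    case False
    have c_pos: "0 < c"
      unfolding c_def w_def by (rule psd_quadratic_form_pos[OF symD psdD False[unfolded w_def]])
    have "u v* D = w" by (metis symD transpose_matrix_vector w_def)
    then have SR1_eq: "SR1 A G u = G - (1 / c) *\<^sub>R outer_prod w w"
      using False by (simp add: SR1_def D_def[symmetric] w_def[symmetric] c_def)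
    then have form: "v \<bullet> (SR1 A G u *v v) = v \<bullet> (G *v v) - (w \<bullet> v)\<^sup>2 / c"
      by (simp add: matrix_vector_mult_diff_rdistrib outer_prod_mult_vector inner_diff_right
          power2_eq_square inner_commute)
    have "(w \<bullet> v)\<^sup>2 \<le> (v \<bullet> (D *v v)) * c"
      using psd_Cauchy_Schwarz[OF symD psdD, of v u] by (simp add: w_def c_def inner_commute)
    then have "(w \<bullet> v)\<^sup>2 / c \<le> v \<bullet> (D *v v)" using c_pos by (simp add: divide_le_eq)
    moreover have "transpose (SR1 A G u) = SR1 A G u"
      by (simp add: SR1_eq transpose_diff transpose_scalar symG transpose_outer_prod)
    ultimately show ?thesis
      using c_pos by (simp add: form D_def quadratic_form_diff)
  qed
  then show "transpose (SR1 A G u) = SR1 A G u"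
    and "v \<bullet> (A *v v) \<le> v \<bullet> (SR1 A G u *v v)"
    and "v \<bullet> (SR1 A G u *v v) \<le> v \<bullet> (G *v v)" by blast+
qed

section \<open>Symmetry of the Hessian\<close>

lemma second_difference_mean_value:
  fixes f :: "'a::real_inner \<Rightarrow> real"
  assumes grad: "\<And>y. (f has_derivative (\<lambda>h. g y \<bullet> h)) (at y)" and "0 < t"
  shows "\<exists>\<xi>\<in>{0<..<t}. f (x + t *\<^sub>R h + t *\<^sub>R k) - f (x + t *\<^sub>R h) - f (x + t *\<^sub>R k) + f x
           = t * ((g (x + (\<xi> *\<^sub>R h + t *\<^sub>R k)) - g (x + \<xi> *\<^sub>R h)) \<bullet> h)"
proof -
  define \<psi> where "\<psi> s = f (x + s *\<^sub>R h + t *\<^sub>R k) - f (x + s *\<^sub>R h)" for s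
  have der: "(\<psi> has_derivative (\<lambda>s'. (g (x + s *\<^sub>R h + t *\<^sub>R k) - g (x + s *\<^sub>R h)) \<bullet> (s' *\<^sub>R h)))
      (at s within {0..t})" for s
    unfolding \<psi>_def inner_diff_left
    by (intro has_derivative_diff has_derivative_compose[OF _ grad] derivative_eq_intros) auto
  obtain \<xi> where "\<xi> \<in> {0<..<t}"
    and "\<psi> t - \<psi> 0 = (g (x + \<xi> *\<^sub>R h + t *\<^sub>R k) - g (x + \<xi> *\<^sub>R h)) \<bullet> ((t - 0) *\<^sub>R h)"
    using mvt_simple[of 0 t \<psi>, OF _ der] \<open>0 < t\<close> by auto
  moreover have "\<psi> t - \<psi> 0 = f (x + t *\<^sub>R h + t *\<^sub>R k) - f (x + t *\<^sub>R h) - f (x + t *\<^sub>R k) + f x"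
    by (simp add: \<psi>_def)
  ultimately show ?thesis
    by (auto simp: add.assoc)
qed

lemma first_order_remainder_difference:
  fixes Hx :: "real^'n^'n"
  assumes remainder: "\<And>y. norm y \<le> t * N \<Longrightarrow> norm (g (x + y) - g x - Hx *v y) \<le> \<epsilon> * (t * N)"
    and "0 < \<xi>" "\<xi> < t" and "norm h + norm k \<le> N" and "0 \<le> \<epsilon>"
  shows "\<bar>t * ((g (x + (\<xi> *\<^sub>R h + t *\<^sub>R k)) - g (x + \<xi> *\<^sub>R h)) \<bullet> h) - t\<^sup>2 * (h \<bullet> (Hx *v k))\<bar>
    \<le> 2 * \<epsilon> * N\<^sup>2 * t\<^sup>2"
proof -
  define R where "R y = g (x + y) - g x - Hx *v y" for y
  have "norm (\<xi> *\<^sub>R h) \<le> t * norm h"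
    using \<open>0 < \<xi>\<close> \<open>\<xi> < t\<close> by (simp add: mult_right_mono)
  moreover have "t * norm h + t * norm k \<le> t * N"
    using \<open>norm h + norm k \<le> N\<close> \<open>0 < \<xi>\<close> \<open>\<xi> < t\<close> by (simp add: distrib_left[symmetric])
  moreover have "0 \<le> t * norm k" using \<open>0 < \<xi>\<close> \<open>\<xi> < t\<close> by simp
  ultimately have y\<^sub>1: "norm (\<xi> *\<^sub>R h + t *\<^sub>R k) \<le> t * N" and y\<^sub>2: "norm (\<xi> *\<^sub>R h) \<le> t * N"
    using norm_triangle_ineq[of "\<xi> *\<^sub>R h" "t *\<^sub>R k"] \<open>\<xi> < t\<close> by simp_all
  have "norm (R (\<xi> *\<^sub>R h + t *\<^sub>R k)) \<le> \<epsilon> * (t * N)" and "norm (R (\<xi> *\<^sub>R h)) \<le> \<epsilon> * (t * N)"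
    using remainder[OF y\<^sub>1] remainder[OF y\<^sub>2] by (simp_all add: R_def)
  then have "norm (R (\<xi> *\<^sub>R h + t *\<^sub>R k) - R (\<xi> *\<^sub>R h)) \<le> 2 * \<epsilon> * (t * N)"
    using norm_triangle_ineq4[of "R (\<xi> *\<^sub>R h + t *\<^sub>R k)" "R (\<xi> *\<^sub>R h)"] by linarith
  moreover have "norm h \<le> N" using \<open>norm h + norm k \<le> N\<close> by (smt (verit) norm_ge_zero)
  ultimately have "\<bar>(R (\<xi> *\<^sub>R h + t *\<^sub>R k) - R (\<xi> *\<^sub>R h)) \<bullet> h\<bar> \<le> (2 * \<epsilon> * (t * N)) * N"
    using Cauchy_Schwarz_ineq2[of "R (\<xi> *\<^sub>R h + t *\<^sub>R k) - R (\<xi> *\<^sub>R h)" h]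
    by (smt (verit) mult_mono norm_ge_zero)
  moreover have "t * ((g (x + (\<xi> *\<^sub>R h + t *\<^sub>R k)) - g (x + \<xi> *\<^sub>R h)) \<bullet> h) - t\<^sup>2 * (h \<bullet> (Hx *v k))
      = t * ((R (\<xi> *\<^sub>R h + t *\<^sub>R k) - R (\<xi> *\<^sub>R h)) \<bullet> h)"
    by (simp add: R_def matrix_vector_right_distrib matrix_vector_mult_scaleR inner_diff_left
        inner_add_left power2_eq_square inner_commute algebra_simps)
  ultimately show ?thesis
    using \<open>0 < \<xi>\<close> \<open>\<xi> < t\<close> by (simp add: abs_mult power2_eq_square mult_ac)
qed

lemma second_difference_approx:
  fixes f :: "real^'n \<Rightarrow> real" and Hx :: "real^'n^'n"
  assumes grad: "\<And>y. (f has_derivative (\<lambda>h. g y \<bullet> h)) (at y)"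
    and hx: "(g has_derivative (\<lambda>h. Hx *v h)) (at x)" and "e > 0"
  shows "\<exists>d>0. \<forall>t. 0 < t \<and> t < d \<longrightarrow>
     \<bar>f (x + t *\<^sub>R h + t *\<^sub>R k) - f (x + t *\<^sub>R h) - f (x + t *\<^sub>R k) + f x - t\<^sup>2 * (h \<bullet> (Hx *v k))\<bar>
       \<le> e * t\<^sup>2"
proof -
  define N where "N = norm h + norm k + 1"
  define \<epsilon> where "\<epsilon> = e / (2 * N\<^sup>2)"
  have "N > 0" unfolding N_def by (simp add: add_nonneg_pos)
  then have "\<epsilon> > 0" using \<open>e > 0\<close> by (simp add: \<epsilon>_def)
  then obtain d where "d > 0"
    and d: "\<And>y. norm (y - x) < d \<Longrightarrow> norm (g y - g x - Hx *v (y - x)) \<le> \<epsilon> * norm (y - x)"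
    using hx[unfolded has_derivative_at_alt] by meson
  show ?thesis
  proof (intro exI[of _ "d / N"] conjI allI impI)
    show "d / N > 0" using \<open>d > 0\<close> \<open>N > 0\<close> by simp
    fix t assume t: "0 < t \<and> t < d / N"
    then have "t * N < d" using \<open>N > 0\<close> by (simp add: pos_less_divide_eq)
    have remainder: "norm (g (x + y) - g x - Hx *v y) \<le> \<epsilon> * (t * N)" if "norm y \<le> t * N" for y
      using d[of "x + y"] that \<open>t * N < d\<close> \<open>\<epsilon> > 0\<close> by (smt (verit) add_diff_cancel_left'
          mult_left_mono)
    obtain \<xi> where "\<xi> \<in> {0<..<t}"
      and "f (x + t *\<^sub>R h + t *\<^sub>R k) - f (x + t *\<^sub>R h) - f (x + t *\<^sub>R k) + f x
             = t * ((g (x + (\<xi> *\<^sub>R h + t *\<^sub>R k)) - g (x + \<xi> *\<^sub>R h)) \<bullet> h)"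
      using second_difference_mean_value[OF grad, of t x h k] t by blast
    then have "\<bar>f (x + t *\<^sub>R h + t *\<^sub>R k) - f (x + t *\<^sub>R h) - f (x + t *\<^sub>R k) + f x
        - t\<^sup>2 * (h \<bullet> (Hx *v k))\<bar> \<le> 2 * \<epsilon> * N\<^sup>2 * t\<^sup>2"
      using first_order_remainder_difference[OF remainder] \<open>\<epsilon> > 0\<close> by (simp add: N_def)
    also have "\<dots> = e * t\<^sup>2"
      using \<open>N > 0\<close> by (simp add: \<epsilon>_def)
    finally show "\<bar>f (x + t *\<^sub>R h + t *\<^sub>R k) - f (x + t *\<^sub>R h) - f (x + t *\<^sub>R k) + f x
        - t\<^sup>2 * (h \<bullet> (Hx *v k))\<bar> \<le> e * t\<^sup>2" .
  qed
qed

lemma hessian_symmetric_inner: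
  fixes f :: "real^'n \<Rightarrow> real" and Hx :: "real^'n^'n"
  assumes grad: "\<And>y. (f has_derivative (\<lambda>h. g y \<bullet> h)) (at y)"
    and hx: "(g has_derivative (\<lambda>h. Hx *v h)) (at x)"
  shows "h \<bullet> (Hx *v k) = k \<bullet> (Hx *v h)"
proof (rule ccontr)
  define \<Delta> where "\<Delta> t = f (x + t *\<^sub>R h + t *\<^sub>R k) - f (x + t *\<^sub>R h) - f (x + t *\<^sub>R k) + f x" for t
  define e where "e = \<bar>h \<bullet> (Hx *v k) - k \<bullet> (Hx *v h)\<bar> / 3"
  assume "h \<bullet> (Hx *v k) \<noteq> k \<bullet> (Hx *v h)"
  then have "e > 0" by (simp add: e_def)
  have swap: "x + t *\<^sub>R k + t *\<^sub>R h = x + t *\<^sub>R h + t *\<^sub>R k" for t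
    by (simp add: algebra_simps)
  obtain d\<^sub>1 where "d\<^sub>1 > 0" and d\<^sub>1: "\<And>t. 0 < t \<Longrightarrow> t < d\<^sub>1 \<Longrightarrow>
      \<bar>\<Delta> t - t\<^sup>2 * (h \<bullet> (Hx *v k))\<bar> \<le> e * t\<^sup>2"
    using second_difference_approx[OF grad hx \<open>e > 0\<close>, of h k] unfolding \<Delta>_def by blast
  obtain d\<^sub>2 where "d\<^sub>2 > 0" and d\<^sub>2: "\<And>t. 0 < t \<Longrightarrow> t < d\<^sub>2 \<Longrightarrow>
      \<bar>\<Delta> t - t\<^sup>2 * (k \<bullet> (Hx *v h))\<bar> \<le> e * t\<^sup>2"
    using second_difference_approx[OF grad hx \<open>e > 0\<close>, of k h] unfolding \<Delta>_def swap
    by (auto simp: algebra_simps)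
  define t where "t = min d\<^sub>1 d\<^sub>2 / 2"
  have "0 < t" "t < d\<^sub>1" "t < d\<^sub>2" using \<open>d\<^sub>1 > 0\<close> \<open>d\<^sub>2 > 0\<close> by (auto simp: t_def)
  then have "\<bar>t\<^sup>2 * (h \<bullet> (Hx *v k) - k \<bullet> (Hx *v h))\<bar> \<le> 2 * (e * t\<^sup>2)"
    using d\<^sub>1[of t] d\<^sub>2[of t] unfolding abs_le_iff right_diff_distrib by auto
  then have "\<bar>h \<bullet> (Hx *v k) - k \<bullet> (Hx *v h)\<bar> \<le> 2 * e"
    using \<open>0 < t\<close> by (simp add: abs_mult)
  then show False
    using \<open>e > 0\<close> by (simp add: e_def)
qed

lemma hessian_symmetric:
  fixes f :: "real^'n \<Rightarrow> real" and Hx :: "real^'n^'n"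
  assumes "\<And>y. (f has_derivative (\<lambda>h. g y \<bullet> h)) (at y)"
    and "(g has_derivative (\<lambda>h. Hx *v h)) (at x)"
  shows "transpose Hx = Hx"
  using hessian_symmetric_inner[OF assms, of "axis _ 1" "axis _ 1"]
  by (simp add: transpose_def vec_eq_iff inner_axis_matrix_vector_axis)

section \<open>Consequences of strong self-concordance\<close>

lemma local_norm_scaleR: "local_norm H z (c *\<^sub>R w) = \<bar>c\<bar> * local_norm H z w"
proof -
  have "(c *\<^sub>R w) \<bullet> (H z *v (c *\<^sub>R w)) = c\<^sup>2 * (w \<bullet> (H z *v w))"
    by (simp add: matrix_vector_mult_scaleR power2_eq_square)
  then show ?thesis
    by (simp add: local_norm_def real_sqrt_mult)
qed

lemma local_norm_le:
  fixes H :: "real^'n \<Rightarrow> real^'n^'n"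
  assumes "\<And>y v. v \<bullet> (H y *v v) \<le> L * (v \<bullet> v)"
  shows "local_norm H z w \<le> sqrt L * norm w"
proof -
  have "local_norm H z w \<le> sqrt (L * (w \<bullet> w))"
    unfolding local_norm_def using assms by (simp add: real_sqrt_le_mono)
  also have "\<dots> = sqrt L * norm w" by (simp add: real_sqrt_mult norm_eq_sqrt_inner)
  finally show ?thesis .
qed

lemma strongly_self_concordant_quadratic_form:
  assumes "strongly_self_concordant H M"
  shows "v \<bullet> (H y *v v) - v \<bullet> (H x *v v) \<le> M * local_norm H z (y - x) * (v \<bullet> (H w *v v))"
  using assms unfolding strongly_self_concordant_def loewner_le_def
  by (metis quadratic_form_diff scaleR_matrix_vector_assoc inner_scaleR_right)

lemma Hessian_quadratic_form_lipschitz: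
  fixes H :: "real^'n \<Rightarrow> real^'n^'n"
  assumes upper: "\<And>y v. v \<bullet> (H y *v v) \<le> L * (v \<bullet> v)" and psd: "\<And>y v. 0 \<le> v \<bullet> (H y *v v)"
    and ssc: "strongly_self_concordant H M" and "M \<ge> 0" and "L \<ge> 0"
  shows "\<bar>v \<bullet> ((H b - H a) *v v)\<bar> \<le> M * sqrt L * L * norm (b - a) * (v \<bullet> v)"
proof -
  have one_side: "v \<bullet> (H y *v v) - v \<bullet> (H x *v v) \<le> M * sqrt L * L * norm (y - x) * (v \<bullet> v)" for x y
  proof -
    have "v \<bullet> (H y *v v) - v \<bullet> (H x *v v) \<le> M * local_norm H x (y - x) * (v \<bullet> (H x *v v))"
      by (rule strongly_self_concordant_quadratic_form[OF ssc])
    also have "\<dots> \<le> M * (sqrt L * norm (y - x)) * (L * (v \<bullet> v))"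
      using local_norm_le[OF upper] upper psd \<open>M \<ge> 0\<close> \<open>L \<ge> 0\<close>
      by (intro mult_mono mult_left_mono) (auto simp: local_norm_def)
    finally show ?thesis by (simp add: algebra_simps)
  qed
  show ?thesis
    using one_side[of a b] one_side[of b a]
    by (simp add: quadratic_form_diff abs_le_iff norm_minus_commute)
qed

lemma Hessian_continuous:
  fixes H :: "real^'n \<Rightarrow> real^'n^'n"
  assumes symH: "\<And>y. transpose (H y) = H y"
    and upper: "\<And>y v. v \<bullet> (H y *v v) \<le> L * (v \<bullet> v)" and psd: "\<And>y v. 0 \<le> v \<bullet> (H y *v v)"
    and ssc: "strongly_self_concordant H M" and "M \<ge> 0" and "L \<ge> 0"
  shows "continuous_on UNIV H"
proof -
  have "(2 * (M * sqrt L * L))-lipschitz_on UNIV (\<lambda>y. H y $ i $ j)" for i j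
  proof (rule lipschitz_onI)
    fix a b
    have "\<bar>(H a - H b) $ i $ j\<bar> \<le> 2 * (M * sqrt L * L * norm (a - b))"
      using Hessian_quadratic_form_lipschitz[OF upper psd ssc \<open>M \<ge> 0\<close> \<open>L \<ge> 0\<close>, where b = a and a = b]
      by (intro symmetric_matrix_entry_bound) (simp_all add: transpose_diff symH)
    then show "dist (H a $ i $ j) (H b $ i $ j) \<le> 2 * (M * sqrt L * L) * dist a b"
      by (simp add: dist_norm dist_real_def)
  qed (use \<open>M \<ge> 0\<close> \<open>L \<ge> 0\<close> in simp)
  then have "continuous_on UNIV (\<lambda>y. \<chi> i j. H y $ i $ j)"
    by (intro continuous_on_vec_lambda lipschitz_on_continuous_on)
  then show ?thesis by simp
qed

section \<open>The averaged Hessian along a segment\<close>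

lemma bounded_linear_matrix_vector_mult_left: "bounded_linear (\<lambda>A :: real^'n^'m. A *v v)"
proof -
  have "linear (\<lambda>A :: real^'n^'m. A *v v)"
    by (rule linearI) (simp_all add: matrix_vector_mult_add_rdistrib)
  then show ?thesis by (simp add: linear_conv_bounded_linear)
qed

lemma bounded_linear_quadratic_form: "bounded_linear (\<lambda>A :: real^'n^'n. v \<bullet> (A *v v))"
  by (rule bounded_linear_compose[OF bounded_linear_inner_right bounded_linear_matrix_vector_mult_left])

lemma bounded_linear_transpose: "bounded_linear (transpose :: real^'n^'m \<Rightarrow> real^'m^'n)"
proof -
  have "linear (transpose :: real^'n^'m \<Rightarrow> real^'m^'n)"
    by (rule linearI) (simp_all add: transpose_add transpose_scalar)
  then show ?thesis by (simp add: linear_conv_bounded_linear)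
qed

lemma matrix_vector_mult_integral:
  fixes F :: "'a::euclidean_space \<Rightarrow> real^'n^'m"
  assumes "F integrable_on S"
  shows "integral S F *v v = integral S (\<lambda>t. F t *v v)"
  using integral_linear[OF assms bounded_linear_matrix_vector_mult_left] by (simp add: comp_def)

lemma quadratic_form_integral:
  fixes F :: "'a::euclidean_space \<Rightarrow> real^'n^'n"
  assumes "F integrable_on S"
  shows "v \<bullet> (integral S F *v v) = integral S (\<lambda>t. v \<bullet> (F t *v v))"
  and "(\<lambda>t. v \<bullet> (F t *v v)) integrable_on S"
  using integral_linear[OF assms bounded_linear_quadratic_form]
    integrable_linear[OF assms bounded_linear_quadratic_form]
  by (simp_all add: comp_def)

lemma transpose_integral_symmetric:
  fixes F :: "'a::euclidean_space \<Rightarrow> real^'n^'n"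
  assumes "F integrable_on S" and "\<And>t. transpose (F t) = F t"
  shows "transpose (integral S F) = integral S F"
proof -
  have "transpose \<circ> F = F" using assms(2) by (simp add: fun_eq_iff)
  then show ?thesis using integral_linear[OF assms(1) bounded_linear_transpose] by simp
qed

lemma integrable_on_segment:
  fixes H :: "real^'n \<Rightarrow> real^'n^'n"
  assumes "continuous_on UNIV H"
  shows "(\<lambda>t. H (x + t *\<^sub>R u)) integrable_on {a..b}"
proof (rule integrable_continuous_interval)
  show "continuous_on {a..b} (\<lambda>t. H (x + t *\<^sub>R u))"
    by (rule continuous_on_compose2[OF assms continuous_on_add[OF continuous_on_const
          continuous_on_scaleR[OF continuous_on_id continuous_on_const]]]) auto
qed

lemma gradient_increment_integral:
  fixes g :: "real^'n \<Rightarrow> real^'n"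
  assumes hess: "\<And>y. (g has_derivative (\<lambda>h. H y *v h)) (at y)" and "continuous_on UNIV H"
  shows "g (x + u) - g x = integral {0..1} (\<lambda>t. H (x + t *\<^sub>R u)) *v u"
proof -
  have "((\<lambda>t. g (x + t *\<^sub>R u)) has_vector_derivative (H (x + t *\<^sub>R u) *v u)) (at t within {0..1})"
    for t
  proof -
    have "((\<lambda>t. x + t *\<^sub>R u) has_derivative (\<lambda>s. s *\<^sub>R u)) (at t within {0..1})"
      by (auto intro!: derivative_eq_intros)
    from has_derivative_compose[OF this hess] show ?thesis
      by (simp add: has_vector_derivative_def matrix_vector_mult_scaleR)
  qed
  then have "((\<lambda>t. H (x + t *\<^sub>R u) *v u) has_integral (g (x + 1 *\<^sub>R u) - g (x + 0 *\<^sub>R u))) {0..1}"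
    by (intro fundamental_theorem_of_calculus) auto
  then show ?thesis
    by (simp add: integral_unique matrix_vector_mult_integral[OF integrable_on_segment[OF assms(2)]])
qed

lemma distance_to_endpoint_has_integral:
  assumes "\<tau> \<in> {0, 1 :: real}"
  shows "((\<lambda>t. \<bar>t - \<tau>\<bar>) has_integral 1 / 2) {0..1}"
proof -
  define F where "F t = (if \<tau> = 0 then t\<^sup>2 / 2 else t - t\<^sup>2 / 2)" for t :: real
  have "(F has_vector_derivative \<bar>t - \<tau>\<bar>) (at t within {0..1})" if "t \<in> {0..1}" for t
  proof -
    have "(F has_real_derivative (if \<tau> = 0 then t else 1 - t)) (at t within {0..1})"
      unfolding F_def by (cases "\<tau> = 0") (auto intro!: derivative_eq_intros)
    then show ?thesis
      using that assms by (auto simp: has_real_derivative_iff_has_vector_derivative)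
  qed
  then have "((\<lambda>t. \<bar>t - \<tau>\<bar>) has_integral F 1 - F 0) {0..1}"
    by (intro fundamental_theorem_of_calculus) auto
  then show ?thesis by (cases "\<tau> = 0") (simp_all add: F_def)
qed

lemma integral_le_of_pointwise_weight_bound:
  fixes p s :: "real \<Rightarrow> real"
  assumes p: "p integrable_on {0..1}" and s: "(s has_integral 1 / 2) {0..1}"
    and le: "\<And>t. t \<in> {0..1} \<Longrightarrow> p t \<le> (1 + c * s t) * q"
  shows "integral {0..1} p \<le> (1 + c / 2) * q"
proof -
  have "((\<lambda>t. q + (c * q) * s t) has_integral q + (c * q) * (1 / 2)) {0..1}"
    using has_integral_add[OF has_integral_const_real[of q 0 1] has_integral_mult_right[OF s]] by simp
  then have "integral {0..1} p \<le> q + (c * q) * (1 / 2)"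
    using le p by (intro has_integral_le[OF integrable_integral]) (auto simp: algebra_simps)
  then show ?thesis by (simp add: algebra_simps)
qed

text \<open>The tangent line of the convex function \<open>y \<mapsto> 1 / (1 + y)\<close> at \<open>y = c / 2\<close>.\<close>

lemma inverse_one_plus_ge_tangent:
  fixes c y :: real
  assumes "0 \<le> c" and "0 \<le> y"
  shows "(1 + c - y) / (1 + c / 2)\<^sup>2 \<le> 1 / (1 + y)"
proof -
  have "(1 + c / 2)\<^sup>2 - (1 + c - y) * (1 + y) = (y - c / 2)\<^sup>2"
    by (simp add: power2_eq_square algebra_simps)
  then have "(1 + c - y) * (1 + y) \<le> (1 + c / 2)\<^sup>2"
    using zero_le_power2[of "y - c / 2"] by linarith
  then show ?thesis
    using assms by (simp add: field_simps)
qed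

lemma integral_ge_of_pointwise_weight_bound:
  fixes p s :: "real \<Rightarrow> real"
  assumes p: "p integrable_on {0..1}" and s: "(s has_integral 1 / 2) {0..1}"
    and s_nonneg: "\<And>t. t \<in> {0..1} \<Longrightarrow> 0 \<le> s t" and "0 \<le> c" and "0 \<le> q"
    and le: "\<And>t. t \<in> {0..1} \<Longrightarrow> q \<le> (1 + c * s t) * p t"
  shows "q \<le> (1 + c / 2) * integral {0..1} p"
proof -
  define m where "m = 1 + c / 2"
  have "m > 0" using \<open>0 \<le> c\<close> by (simp add: m_def)
  define T where "T t = q * (1 + c - c * s t) / m\<^sup>2" for t
  have "(T has_integral q * (1 + c - c * (1 / 2)) / m\<^sup>2) {0..1}"
    unfolding T_def using has_integral_diff[OF has_integral_const_real[of "1 + c" 0 1]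
      has_integral_mult_right[OF s, of c]]
    by (intro has_integral_mult_right has_integral_divide) simp
  moreover have "1 + c - c * (1 / 2) = m"
    by (simp add: m_def)
  ultimately have "(T has_integral q * m / m\<^sup>2) {0..1}"
    by (simp only:)
  then have T_int: "(T has_integral q / m) {0..1}"
    using \<open>m > 0\<close> by (simp add: power2_eq_square)
  have "T t \<le> p t" if "t \<in> {0..1}" for t
  proof -
    have "0 \<le> c * s t" using \<open>0 \<le> c\<close> s_nonneg[OF that] by simp
    then have "T t \<le> q * (1 / (1 + c * s t))"
      using mult_left_mono[OF inverse_one_plus_ge_tangent[OF \<open>0 \<le> c\<close>] \<open>0 \<le> q\<close>]
      by (simp add: T_def m_def)
    also have "\<dots> \<le> p t"
      using le[OF that] \<open>0 \<le> c * s t\<close> by (simp add: divide_simps mult.commute)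
    finally show ?thesis .
  qed
  then have "q / m \<le> integral {0..1} p"
    using T_int p by (intro has_integral_le[OF T_int integrable_integral]) auto
  then show ?thesis
    using \<open>m > 0\<close> by (simp add: m_def divide_simps mult.commute)
qed

text \<open>Along the segment, strong self-concordance compares \<open>H\<close> at each point with \<open>H\<close> at an endpoint
  up to the factor \<open>1 + M r |t - \<tau>|\<close>; averaging over \<open>t\<close> gives \<open>1 + M r / 2\<close>.\<close>

lemma integral_Hessian_endpoint_bounds:
  fixes H :: "real^'n \<Rightarrow> real^'n^'n"
  assumes ssc: "strongly_self_concordant H M" and "0 \<le> M"
    and psd: "\<And>y v. 0 \<le> v \<bullet> (H y *v v)"
    and H_int: "(\<lambda>t. H (x + t *\<^sub>R u)) integrable_on {0..1}" and \<tau>: "\<tau> \<in> {0, 1}"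
  defines "J \<equiv> integral {0..1} (\<lambda>t. H (x + t *\<^sub>R u))" and "r \<equiv> local_norm H x u"
  shows "v \<bullet> (J *v v) \<le> (1 + M * r / 2) * (v \<bullet> (H (x + \<tau> *\<^sub>R u) *v v))"
    and "v \<bullet> (H (x + \<tau> *\<^sub>R u) *v v) \<le> (1 + M * r / 2) * (v \<bullet> (J *v v))"
proof -
  define p where "p t = v \<bullet> (H (x + t *\<^sub>R u) *v v)" for t
  have J_form: "v \<bullet> (J *v v) = integral {0..1} p" and p_int: "p integrable_on {0..1}"
    unfolding J_def p_def by (rule quadratic_form_integral[OF H_int])+
  have dist: "local_norm H x ((x + a *\<^sub>R u) - (x + b *\<^sub>R u)) = \<bar>a - b\<bar> * r" for a b
  proof -
    have "(x + a *\<^sub>R u) - (x + b *\<^sub>R u) = (a - b) *\<^sub>R u" by (simp add: algebra_simps)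
    then show ?thesis by (simp add: local_norm_scaleR r_def)
  qed
  have "0 \<le> M * r" using \<open>0 \<le> M\<close> psd by (simp add: r_def local_norm_def)
  note s = distance_to_endpoint_has_integral[OF \<tau>]
  show "v \<bullet> (J *v v) \<le> (1 + M * r / 2) * (v \<bullet> (H (x + \<tau> *\<^sub>R u) *v v))"
    unfolding J_form
  proof (rule integral_le_of_pointwise_weight_bound[OF p_int s])
    fix t
    have "p t - p \<tau> \<le> M * (\<bar>t - \<tau>\<bar> * r) * p \<tau>"
      using strongly_self_concordant_quadratic_form[OF ssc,
          of v "x + t *\<^sub>R u" "x + \<tau> *\<^sub>R u" x "x + \<tau> *\<^sub>R u"]
      unfolding dist p_def .
    then show "p t \<le> (1 + M * r * \<bar>t - \<tau>\<bar>) * (v \<bullet> (H (x + \<tau> *\<^sub>R u) *v v))"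
      by (simp add: p_def algebra_simps)
  qed
  show "v \<bullet> (H (x + \<tau> *\<^sub>R u) *v v) \<le> (1 + M * r / 2) * (v \<bullet> (J *v v))"
    unfolding J_form
  proof (rule integral_ge_of_pointwise_weight_bound[OF p_int s _ \<open>0 \<le> M * r\<close> psd])
    fix t
    have "p \<tau> - p t \<le> M * (\<bar>\<tau> - t\<bar> * r) * p t"
      using strongly_self_concordant_quadratic_form[OF ssc,
          of v "x + \<tau> *\<^sub>R u" "x + t *\<^sub>R u" x "x + t *\<^sub>R u"]
      unfolding dist p_def .
    then show "v \<bullet> (H (x + \<tau> *\<^sub>R u) *v v) \<le> (1 + M * r * \<bar>t - \<tau>\<bar>) * p t"
      by (simp add: p_def algebra_simps abs_minus_commute)
  qed simp
qed

lemma prod_one_plus_le_exp_sum: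
  fixes a :: "'a \<Rightarrow> real"
  assumes "finite S" and "\<And>j. j \<in> S \<Longrightarrow> 0 \<le> a j"
  shows "(\<Prod>j\<in>S. 1 + a j) \<le> exp (\<Sum>j\<in>S. a j)"
  unfolding exp_sum[OF assms(1)] using assms(2) by (intro prod_mono) auto

lemma geometric_sum_le:
  fixes \<rho> :: real
  assumes "0 \<le> \<rho>" and "\<rho> < 1"
  shows "(\<Sum>j<k. \<rho> ^ j) \<le> 1 / (1 - \<rho>)"
  using assms by (simp add: sum_gp_strict divide_right_mono)

section \<open>The SR1 method with correction strategy\<close>

locale sr1_correction =
  fixes g :: "real^'n \<Rightarrow> real^'n" and H :: "real^'n \<Rightarrow> real^'n^'n"
    and \<mu> L M :: real and x :: "nat \<Rightarrow> real^'n" and G :: "nat \<Rightarrow> real^'n^'n"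
    and \<kappa> :: real and u :: "nat \<Rightarrow> real^'n" and r :: "nat \<Rightarrow> real"
    and Gt J :: "nat \<Rightarrow> real^'n^'n"
  assumes kappa_def: "\<kappa> = L / \<mu>"
    and u_def: "u k = x (Suc k) - x k"
    and r_def: "r k = local_norm H (x k) (u k)"
    and Gt_def: "Gt k = ((1 + M * (if k = 0 then 0 else r (k - 1)) / 2) * (1 + M * r k / 2)) *\<^sub>R G k"
    and J_def: "J k = integral {0..1} (\<lambda>t. H (x k + t *\<^sub>R u k))"
    and hess: "\<And>y. (g has_derivative (\<lambda>h. H y *v h)) (at y)"
    and symH: "\<And>y. transpose (H y) = H y"
    and mu_pos: "0 < \<mu>" and mu_L: "\<mu> \<le> L"
    and bounds: "\<And>y. loewner_le (\<mu> *\<^sub>R mat 1) (H y) \<and> loewner_le (H y) (L *\<^sub>R mat 1)"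
    and M_nonneg: "0 \<le> M"
    and ssc: "strongly_self_concordant H M"
    and G0: "G 0 = L *\<^sub>R mat 1"
    and x_step: "\<And>k. x (Suc k) = x k - matrix_inv (G k) *v g (x k)"
    and G_step: "\<And>k. G (Suc k) = SR1 (J k) (Gt k) (u k)"
    and init: "M * newton_decrement g H (x 0) \<le> ln (3 / 2) / (4 * \<kappa>)"
begin

text \<open>\<open>Gt\<close> and \<open>decrement k\<close> are \<open>G\<^sub>k\<close> with tilde and \<open>\<lambda>\<^sub>f(x\<^sub>k)\<close> of the paper; with the definitions below,
  \<open>Gt k = (1 + \<beta> k) (1 + \<alpha> k) G k\<close> (lemma \<open>Gt_factor\<close>).\<close>

definition \<alpha> :: "nat \<Rightarrow> real" where "\<alpha> k = M * r k / 2"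

definition \<beta> :: "nat \<Rightarrow> real" where "\<beta> k = (if k = 0 then 0 else \<alpha> (k - 1))"

definition P :: "nat \<Rightarrow> real" where "P k = (\<Prod>j<k. (1 + \<beta> j) * (1 + \<alpha> j))"

definition decrement :: "nat \<Rightarrow> real" where "decrement k = newton_decrement g H (x k)"

definition \<delta> :: real where "\<delta> = M * decrement 0"

definition \<rho> :: real where "\<rho> = 1 - 1 / (4 * \<kappa>)"

definition hessian_approximation :: "nat \<Rightarrow> bool" where
  "hessian_approximation k \<longleftrightarrow> transpose (G k) = G k
     \<and> (\<forall>v. v \<bullet> (H (x k) *v v) \<le> (1 + \<beta> k) * (v \<bullet> (G k *v v)))
     \<and> (\<forall>v. v \<bullet> (G k *v v) \<le> P k * L * (v \<bullet> v))"

definition linear_convergence :: "nat \<Rightarrow> bool" where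
  "linear_convergence k \<longleftrightarrow> hessian_approximation k \<and> M * decrement k \<le> \<delta> * \<rho> ^ k
     \<and> (\<forall>j<k. \<alpha> j \<le> 9 / 16 * \<delta> * \<rho> ^ j)"

lemma H_lower: "\<mu> * (v \<bullet> v) \<le> v \<bullet> (H y *v v)"
  and H_upper: "v \<bullet> (H y *v v) \<le> L * (v \<bullet> v)"
  using bounds unfolding loewner_le_def by simp_all

lemma H_nonneg: "0 \<le> v \<bullet> (H y *v v)"
  using H_lower[of v y] mu_pos by (meson inner_ge_zero mult_nonneg_nonneg less_imp_le order_trans)

lemma H_invertible: "invertible (H y)"
  using positive_definite_invertible[OF mu_pos H_lower] .

lemma kappa_ge_1: "1 \<le> \<kappa>"
  using mu_pos mu_L by (simp add: kappa_def)

lemma H_continuous: "continuous_on UNIV H"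
  using Hessian_continuous[OF symH H_upper H_nonneg ssc M_nonneg] mu_pos mu_L by simp

lemma J_integrable: "(\<lambda>t. H (x k + t *\<^sub>R u k)) integrable_on {0..1}"
  using integrable_on_segment[OF H_continuous] .

lemma J_symmetric: "transpose (J k) = J k"
  unfolding J_def by (rule transpose_integral_symmetric[OF J_integrable symH])

lemma J_lower: "\<mu> * (v \<bullet> v) \<le> v \<bullet> (J k *v v)"
proof -
  have "((\<lambda>t::real. \<mu> * (v \<bullet> v)) has_integral \<mu> * (v \<bullet> v)) {0..1}"
    using has_integral_const_real[of "\<mu> * (v \<bullet> v)" 0 1] by simp
  moreover have "((\<lambda>t. v \<bullet> (H (x k + t *\<^sub>R u k) *v v)) has_integral v \<bullet> (J k *v v)) {0..1}"
    unfolding J_def quadratic_form_integral(1)[OF J_integrable]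
    by (rule integrable_integral[OF quadratic_form_integral(2)[OF J_integrable]])
  ultimately show ?thesis
    by (rule has_integral_le) (rule H_lower)
qed

lemma J_nonneg: "0 \<le> v \<bullet> (J k *v v)"
  using J_lower[of v k] mu_pos by (meson inner_ge_zero mult_nonneg_nonneg less_imp_le order_trans)

lemma J_invertible: "invertible (J k)"
  using positive_definite_invertible[OF mu_pos J_lower] .

lemma gradient_step: "g (x (Suc k)) - g (x k) = J k *v u k"
  using gradient_increment_integral[OF hess H_continuous, of "x k" "u k"] by (simp add: J_def u_def)

lemma alpha_nonneg: "0 \<le> \<alpha> k"
  using M_nonneg H_nonneg by (simp add: \<alpha>_def r_def local_norm_def)

lemma beta_nonneg: "0 \<le> \<beta> k"
  using alpha_nonneg by (simp add: \<beta>_def)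

lemma Gt_factor: "Gt k = ((1 + \<beta> k) * (1 + \<alpha> k)) *\<^sub>R G k"
  by (simp add: Gt_def \<alpha>_def \<beta>_def)

lemma decrement_nonneg: "0 \<le> decrement k"
  and decrement_square: "(decrement k)\<^sup>2 = g (x k) \<bullet> (matrix_inv (H (x k)) *v g (x k))"
proof -
  have "0 \<le> g (x k) \<bullet> (matrix_inv (H (x k)) *v g (x k))"
    using quadratic_form_matrix_inv_nonneg H_invertible H_nonneg by blast
  then show "0 \<le> decrement k" and "(decrement k)\<^sup>2 = g (x k) \<bullet> (matrix_inv (H (x k)) *v g (x k))"
    by (simp_all add: decrement_def newton_decrement_def)
qed

lemma J_le_H: "v \<bullet> (J k *v v) \<le> (1 + \<alpha> k) * (v \<bullet> (H (x k) *v v))"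
  and H_le_J: "v \<bullet> (H (x k) *v v) \<le> (1 + \<alpha> k) * (v \<bullet> (J k *v v))"
  and J_le_H_Suc: "v \<bullet> (J k *v v) \<le> (1 + \<alpha> k) * (v \<bullet> (H (x (Suc k)) *v v))"
  and H_Suc_le_J: "v \<bullet> (H (x (Suc k)) *v v) \<le> (1 + \<alpha> k) * (v \<bullet> (J k *v v))"
  using integral_Hessian_endpoint_bounds[OF ssc M_nonneg H_nonneg J_integrable, of 0 v]
    integral_Hessian_endpoint_bounds[OF ssc M_nonneg H_nonneg J_integrable, of 1 v]
  by (simp_all add: J_def \<alpha>_def r_def u_def)

lemma J_le_Gt:
  assumes "hessian_approximation k"
  shows "v \<bullet> (J k *v v) \<le> v \<bullet> (Gt k *v v)"
proof -
  have "v \<bullet> (J k *v v) \<le> (1 + \<alpha> k) * (v \<bullet> (H (x k) *v v))" by (rule J_le_H)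
  also have "\<dots> \<le> (1 + \<alpha> k) * ((1 + \<beta> k) * (v \<bullet> (G k *v v)))"
    using assms alpha_nonneg[of k] by (intro mult_left_mono) (auto simp: hessian_approximation_def)
  also have "\<dots> = v \<bullet> (Gt k *v v)" by (simp add: Gt_factor)
  finally show ?thesis .
qed

lemma G_le_H:
  assumes "hessian_approximation k" and "P k \<le> 3"
  shows "v \<bullet> (G k *v v) \<le> (3 * \<kappa>) * (v \<bullet> (H (x k) *v v))"
proof -
  have "v \<bullet> (G k *v v) \<le> P k * L * (v \<bullet> v)"
    using assms(1) by (simp add: hessian_approximation_def)
  also have "\<dots> \<le> 3 * L * (v \<bullet> v)"
    using assms(2) mu_pos mu_L by (intro mult_right_mono) auto
  also have "\<dots> = (3 * \<kappa>) * (\<mu> * (v \<bullet> v))"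
    using mu_pos by (simp add: kappa_def)
  also have "\<dots> \<le> (3 * \<kappa>) * (v \<bullet> (H (x k) *v v))"
    using kappa_ge_1 H_lower by (intro mult_left_mono) auto
  finally show ?thesis .
qed

lemma hessian_approximation_0: "hessian_approximation 0"
  using H_upper by (simp add: hessian_approximation_def G0 \<beta>_def P_def transpose_scalar)

lemma hessian_approximation_Suc:
  assumes "hessian_approximation k"
  shows "hessian_approximation (Suc k)"
proof -
  have symGt: "transpose (Gt k) = Gt k"
    using assms by (simp add: Gt_factor transpose_scalar hessian_approximation_def)
  note SR1 = SR1_between[OF J_symmetric symGt J_le_Gt[OF assms], where u = "u k"]
  have "v \<bullet> (H (x (Suc k)) *v v) \<le> (1 + \<beta> (Suc k)) * (v \<bullet> (G (Suc k) *v v))" for v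
  proof -
    have "v \<bullet> (H (x (Suc k)) *v v) \<le> (1 + \<alpha> k) * (v \<bullet> (J k *v v))" by (rule H_Suc_le_J)
    also have "\<dots> \<le> (1 + \<alpha> k) * (v \<bullet> (G (Suc k) *v v))"
      using SR1(2)[of v] alpha_nonneg[of k] by (simp add: G_step mult_left_mono)
    finally show ?thesis by (simp add: \<beta>_def)
  qed
  moreover have "v \<bullet> (G (Suc k) *v v) \<le> P (Suc k) * L * (v \<bullet> v)" for v
  proof -
    have "v \<bullet> (G (Suc k) *v v) \<le> v \<bullet> (Gt k *v v)" using SR1(3)[of v] by (simp add: G_step)
    also have "\<dots> = (1 + \<beta> k) * (1 + \<alpha> k) * (v \<bullet> (G k *v v))" by (simp add: Gt_factor)
    also have "\<dots> \<le> (1 + \<beta> k) * (1 + \<alpha> k) * (P k * L * (v \<bullet> v))"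
      using assms alpha_nonneg[of k] beta_nonneg[of k]
      by (intro mult_left_mono) (auto simp: hessian_approximation_def)
    also have "\<dots> = P (Suc k) * L * (v \<bullet> v)" by (simp add: P_def)
    finally show ?thesis .
  qed
  ultimately show ?thesis
    using SR1(1) by (simp add: hessian_approximation_def G_step)
qed

lemma G_nonneg:
  assumes "hessian_approximation k"
  shows "0 \<le> v \<bullet> (G k *v v)"
proof -
  have "0 \<le> (1 + \<beta> k) * (v \<bullet> (G k *v v))"
    using assms H_nonneg[of v "x k"] by (auto simp: hessian_approximation_def intro: order_trans)
  then show ?thesis
    using beta_nonneg[of k] by (simp add: zero_le_mult_iff)
qed

lemma G_invertible:
  assumes "hessian_approximation k"
  shows "invertible (G k)"
proof (rule positive_definite_invertible)
  show "0 < \<mu> / (1 + \<beta> k)" using mu_pos beta_nonneg[of k] by simp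
  show "\<mu> / (1 + \<beta> k) * (v \<bullet> v) \<le> v \<bullet> (G k *v v)" for v
    using H_lower[of v "x k"] assms beta_nonneg[of k]
    by (auto simp: hessian_approximation_def field_simps intro: order_trans)
qed

lemma G_mult_step: "hessian_approximation k \<Longrightarrow> G k *v u k = - g (x k)"
  by (simp add: u_def x_step matrix_vector_mult_uminus_right matrix_inv_vector G_invertible)

lemma step_length_le:
  assumes "hessian_approximation k"
  shows "r k \<le> (1 + \<beta> k) * decrement k"
  using quasi_Newton_step_norm_le[OF symH H_invertible H_nonneg _ _ G_mult_step[OF assms]]
    assms beta_nonneg[of k]
  by (simp add: r_def local_norm_def decrement_def newton_decrement_def hessian_approximation_def)

lemma decrement_Suc_le_contraction:
  assumes approx: "hessian_approximation k" and "0 \<le> \<theta>" "\<theta> < 1"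
    and lower: "\<And>v. v \<bullet> (J k *v v) \<le> (1 + \<theta>) * (v \<bullet> (G k *v v))"
    and upper: "\<And>v. (1 - \<theta>) * (v \<bullet> (G k *v v)) \<le> v \<bullet> (J k *v v)"
  shows "decrement (Suc k) \<le> (1 + \<alpha> k) * \<theta> * decrement k"
proof -
  define g\<^sub>0 where "g\<^sub>0 = g (x k)"
  define g\<^sub>1 where "g\<^sub>1 = g (x (Suc k))"
  have symG: "transpose (G k) = G k" using approx by (simp add: hessian_approximation_def)
  have "0 < 1 + \<alpha> k" using alpha_nonneg[of k] by simp
  have G_step: "G k *v (- u k) = g\<^sub>0"
    using G_mult_step[OF approx] by (simp add: matrix_vector_mult_uminus_right g\<^sub>0_def)
  moreover have "J k *v (- u k) = g\<^sub>0 - g\<^sub>1"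
    using gradient_step[of k, symmetric]
    by (simp add: matrix_vector_mult_uminus_right g\<^sub>0_def g\<^sub>1_def)
  ultimately have residual: "G k *v (- u k) - J k *v (- u k) = g\<^sub>1" by simp
  have contraction: "g\<^sub>1 \<bullet> (matrix_inv (J k) *v g\<^sub>1) \<le> \<theta>\<^sup>2 * (g\<^sub>0 \<bullet> (matrix_inv (J k) *v g\<^sub>0))"
    using dual_norm_residual_contraction[OF J_symmetric symG J_invertible J_nonneg
        \<open>0 \<le> \<theta>\<close> \<open>\<theta> < 1\<close> lower upper, of "- u k", unfolded residual, unfolded G_step] .
  have "(decrement (Suc k))\<^sup>2 \<le> (1 + \<alpha> k) * (g\<^sub>1 \<bullet> (matrix_inv (J k) *v g\<^sub>1))"
    unfolding decrement_square g\<^sub>1_def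
    by (rule quadratic_form_matrix_inv_antimono[OF J_symmetric J_invertible H_invertible J_nonneg
          J_le_H_Suc \<open>0 < 1 + \<alpha> k\<close>])
  also have "\<dots> \<le> (1 + \<alpha> k) * (\<theta>\<^sup>2 * (g\<^sub>0 \<bullet> (matrix_inv (J k) *v g\<^sub>0)))"
    using contraction \<open>0 < 1 + \<alpha> k\<close> by simp
  also have "\<dots> \<le> (1 + \<alpha> k) * (\<theta>\<^sup>2 * ((1 + \<alpha> k) * (decrement k)\<^sup>2))"
  proof -
    have "g\<^sub>0 \<bullet> (matrix_inv (J k) *v g\<^sub>0) \<le> (1 + \<alpha> k) * (decrement k)\<^sup>2"
      unfolding decrement_square g\<^sub>0_def
      by (rule quadratic_form_matrix_inv_antimono[OF symH H_invertible J_invertible H_nonneg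
            H_le_J \<open>0 < 1 + \<alpha> k\<close>])
    then have "\<theta>\<^sup>2 * (g\<^sub>0 \<bullet> (matrix_inv (J k) *v g\<^sub>0)) \<le> \<theta>\<^sup>2 * ((1 + \<alpha> k) * (decrement k)\<^sup>2)"
      by (rule mult_left_mono) simp
    then show ?thesis
      by (rule mult_left_mono) (use \<open>0 < 1 + \<alpha> k\<close> in simp)
  qed
  also have "\<dots> = ((1 + \<alpha> k) * \<theta> * decrement k)\<^sup>2"
    by (simp add: power2_eq_square algebra_simps)
  finally show ?thesis
    by (rule power2_le_imp_le) (use alpha_nonneg[of k] decrement_nonneg[of k] \<open>0 \<le> \<theta>\<close> in simp)
qed

lemma rho_bounds: "0 \<le> \<rho>" "\<rho> < 1"
  using kappa_ge_1 by (simp_all add: \<rho>_def field_simps)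

lemma delta_nonneg: "0 \<le> \<delta>"
  using M_nonneg decrement_nonneg[of 0] by (simp add: \<delta>_def)

lemma ln_three_halves_le: "ln (3 / 2 :: real) \<le> 1 / 2"
  using ln_le_minus_one[of "3 / 2 :: real"] by simp

lemma delta_le: "\<delta> \<le> 1 / (8 * \<kappa>)"
proof -
  have "\<delta> \<le> ln (3 / 2) / (4 * \<kappa>)" using init by (simp add: \<delta>_def decrement_def)
  also have "\<dots> \<le> (1 / 2) / (4 * \<kappa>)"
    using ln_three_halves_le kappa_ge_1 by (intro divide_right_mono) auto
  finally show ?thesis by simp
qed

lemma P_le_3:
  assumes "\<And>j. j < k \<Longrightarrow> \<alpha> j \<le> 9 / 16 * \<delta> * \<rho> ^ j"
  shows "P k \<le> 3"
proof -
  have "(\<Sum>j<k. \<alpha> j) \<le> (\<Sum>j<k. 9 / 16 * \<delta> * \<rho> ^ j)"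
    using assms by (intro sum_mono) simp
  also have "\<dots> = 9 / 16 * \<delta> * (\<Sum>j<k. \<rho> ^ j)"
    by (simp add: sum_distrib_left)
  also have "\<dots> \<le> 9 / 16 * \<delta> * (1 / (1 - \<rho>))"
    using geometric_sum_le[OF rho_bounds] delta_nonneg by (intro mult_left_mono) auto
  also have "\<dots> = 9 / 4 * \<kappa> * \<delta>"
    using kappa_ge_1 by (simp add: \<rho>_def)
  finally have sum_alpha: "(\<Sum>j<k. \<alpha> j) \<le> 9 / 4 * \<kappa> * \<delta>" .
  have sum_beta: "(\<Sum>j<k. \<beta> j) \<le> (\<Sum>j<k. \<alpha> j)"
  proof (cases k)
    case (Suc m)
    then have "(\<Sum>j<k. \<beta> j) = (\<Sum>j<m. \<alpha> j)"
      unfolding Suc sum.lessThan_Suc_shift by (simp add: \<beta>_def)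
    then show ?thesis
      using Suc alpha_nonneg[of m] by simp
  qed simp
  have "9 / 2 * \<kappa> * \<delta> \<le> 9 / 2 * \<kappa> * (ln (3 / 2) / (4 * \<kappa>))"
    using init kappa_ge_1 by (intro mult_left_mono) (auto simp: \<delta>_def decrement_def)
  also have "\<dots> = 9 / 8 * ln (3 / 2)"
    using kappa_ge_1 by simp
  also have "\<dots> \<le> ln 3"
  proof -
    have "ln (3 / 2 :: real) \<le> ln 2" and "0 \<le> ln (3 / 2 :: real)" by simp_all
    moreover have "ln 3 = ln (3 / 2) + ln (2 :: real)" using ln_mult[of "3 / 2 :: real" 2] by simp
    ultimately show ?thesis by linarith
  qed
  finally have "(\<Sum>j<k. \<beta> j) + (\<Sum>j<k. \<alpha> j) \<le> ln 3"
    using sum_alpha sum_beta by linarith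
  have "P k = (\<Prod>j<k. 1 + \<beta> j) * (\<Prod>j<k. 1 + \<alpha> j)"
    by (simp add: P_def prod.distrib)
  also have "\<dots> \<le> exp (\<Sum>j<k. \<beta> j) * exp (\<Sum>j<k. \<alpha> j)"
    using alpha_nonneg beta_nonneg
    by (intro mult_mono prod_one_plus_le_exp_sum prod_nonneg) (auto simp: add_nonneg_nonneg)
  also have "\<dots> = exp ((\<Sum>j<k. \<beta> j) + (\<Sum>j<k. \<alpha> j))"
    by (simp add: exp_add)
  also have "\<dots> \<le> exp (ln 3)"
    using \<open>(\<Sum>j<k. \<beta> j) + (\<Sum>j<k. \<alpha> j) \<le> ln 3\<close> by (simp only: exp_le_cancel_iff)
  finally show ?thesis by simp
qed

text \<open>The relative accuracy \<open>\<theta>\<close> comes from \<open>G\<^sub>k \<preceq> 3\<kappa> \<nabla>\<^sup>2f(x\<^sub>k) \<preceq> 3\<kappa> (1 + \<alpha>\<^sub>k) J\<^sub>k\<close>; the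
  smallness of \<open>\<alpha>\<^sub>k\<close> makes the resulting rate \<open>(1 + \<alpha>\<^sub>k) \<theta> = 1 + \<alpha>\<^sub>k - 1 / (3\<kappa>)\<close> at most \<open>\<rho>\<close>.\<close>

lemma decrement_Suc_le:
  assumes approx: "hessian_approximation k" and "P k \<le> 3"
    and "\<beta> k \<le> 1 / 8" and "\<alpha> k \<le> 9 / (128 * \<kappa>)"
  shows "decrement (Suc k) \<le> \<rho> * decrement k"
proof -
  define \<theta> where "\<theta> = 1 - 1 / (3 * \<kappa> * (1 + \<alpha> k))"
  have "1 \<le> \<kappa> * (1 + \<alpha> k)"
    using kappa_ge_1 alpha_nonneg[of k] mult_mono[of 1 \<kappa> 1 "1 + \<alpha> k"] by simp
  then have "1 / (3 * \<kappa> * (1 + \<alpha> k)) \<le> 1 / 3"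
    by (intro divide_left_mono) auto
  then have "2 / 3 \<le> \<theta>" "\<theta> < 1"
    using kappa_ge_1 alpha_nonneg[of k] by (simp_all add: \<theta>_def)
  have "(1 + \<beta> k) * (1 + \<alpha> k) \<le> (1 + 1 / 8) * (1 + 9 / 128)"
    using assms(3,4) kappa_ge_1 alpha_nonneg[of k] beta_nonneg[of k]
      divide_left_mono[of 128 "128 * \<kappa>" 9]
    by (intro mult_mono) auto
  then have "(1 + \<beta> k) * (1 + \<alpha> k) \<le> 1 + \<theta>"
    using \<open>2 / 3 \<le> \<theta>\<close> by simp
  then have lower: "v \<bullet> (J k *v v) \<le> (1 + \<theta>) * (v \<bullet> (G k *v v))" for v
    using J_le_Gt[OF approx, of v] mult_right_mono[OF _ G_nonneg[OF approx, of v]]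
    by (simp add: Gt_factor) (meson order_trans)
  have upper: "(1 - \<theta>) * (v \<bullet> (G k *v v)) \<le> v \<bullet> (J k *v v)" for v
  proof -
    have "v \<bullet> (G k *v v) \<le> (3 * \<kappa>) * ((1 + \<alpha> k) * (v \<bullet> (J k *v v)))"
      using G_le_H[OF approx \<open>P k \<le> 3\<close>, of v] H_le_J[of v k] kappa_ge_1
      by (smt (verit) mult_left_mono)
    then have "v \<bullet> (G k *v v) \<le> (v \<bullet> (J k *v v)) * (3 * \<kappa> * (1 + \<alpha> k))"
      by (simp add: algebra_simps)
    moreover have "0 < 3 * \<kappa> * (1 + \<alpha> k)"
      using kappa_ge_1 alpha_nonneg[of k] by simp
    ultimately show ?thesis
      by (simp add: \<theta>_def pos_divide_le_eq)
  qed
  have "decrement (Suc k) \<le> (1 + \<alpha> k) * \<theta> * decrement k"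
    using decrement_Suc_le_contraction[OF approx _ \<open>\<theta> < 1\<close> lower upper] \<open>2 / 3 \<le> \<theta>\<close> by simp
  also have "(1 + \<alpha> k) * \<theta> = 1 + \<alpha> k - (1 + \<alpha> k) / (3 * \<kappa> * (1 + \<alpha> k))"
    by (simp add: \<theta>_def right_diff_distrib)
  also have "\<dots> = 1 + \<alpha> k - 1 / (3 * \<kappa>)"
    using alpha_nonneg[of k] by simp
  also have "\<dots> \<le> \<rho>"
    using assms(4) kappa_ge_1 by (simp add: \<rho>_def field_simps)
  finally show ?thesis
    using decrement_nonneg[of k] by (simp add: mult_right_mono)
qed

lemma linear_convergence_0: "linear_convergence 0"
  using hessian_approximation_0 by (simp add: linear_convergence_def \<delta>_def)

lemma linear_convergence_Suc:
  assumes "linear_convergence k"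
  shows "linear_convergence (Suc k)"
proof -
  have approx: "hessian_approximation k" and decrement_k: "M * decrement k \<le> \<delta> * \<rho> ^ k"
    and alpha_before: "\<And>j. j < k \<Longrightarrow> \<alpha> j \<le> 9 / 16 * \<delta> * \<rho> ^ j"
    using assms by (auto simp: linear_convergence_def)
  have alpha_small: "a \<le> 9 / 16 * \<delta> * \<rho> ^ j \<Longrightarrow> a \<le> 9 / (128 * \<kappa>)" for a j
  proof -
    assume "a \<le> 9 / 16 * \<delta> * \<rho> ^ j"
    also have "\<dots> \<le> 9 / 16 * \<delta>"
      by (rule mult_left_le) (use rho_bounds delta_nonneg in \<open>simp_all add: power_le_one\<close>)
    also have "\<dots> \<le> 9 / (128 * \<kappa>)"
      using delta_le by simp
    finally show ?thesis .
  qed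
  have "9 / (128 * \<kappa>) \<le> 1 / 8"
    using kappa_ge_1 by (simp add: field_simps)
  have "\<beta> k \<le> 1 / 8"
  proof (cases k)
    case (Suc m)
    then have "\<beta> k \<le> 9 / (128 * \<kappa>)"
      using alpha_small[OF alpha_before[of m]] by (simp add: \<beta>_def)
    then show ?thesis
      using \<open>9 / (128 * \<kappa>) \<le> 1 / 8\<close> by linarith
  qed (simp add: \<beta>_def)
  have "P k \<le> 3" by (rule P_le_3) (rule alpha_before)
  have "\<alpha> k \<le> M * ((1 + \<beta> k) * decrement k) / 2"
    using step_length_le[OF approx] M_nonneg by (simp add: \<alpha>_def mult_left_mono divide_right_mono)
  also have "\<dots> = (1 + \<beta> k) / 2 * (M * decrement k)"
    by simp
  also have "\<dots> \<le> 9 / 16 * (M * decrement k)"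
    using \<open>\<beta> k \<le> 1 / 8\<close> M_nonneg decrement_nonneg[of k] by (intro mult_right_mono) auto
  also have "\<dots> \<le> 9 / 16 * \<delta> * \<rho> ^ k"
    using decrement_k by simp
  finally have alpha_k: "\<alpha> k \<le> 9 / 16 * \<delta> * \<rho> ^ k" .
  have "M * decrement (Suc k) \<le> M * (\<rho> * decrement k)"
    using decrement_Suc_le[OF approx \<open>P k \<le> 3\<close> \<open>\<beta> k \<le> 1 / 8\<close> alpha_small[OF alpha_k]] M_nonneg
    by (rule mult_left_mono)
  also have "\<dots> = \<rho> * (M * decrement k)"
    by simp
  also have "\<dots> \<le> \<rho> * (\<delta> * \<rho> ^ k)"
    using decrement_k rho_bounds by (intro mult_left_mono) auto
  also have "\<dots> = \<delta> * \<rho> ^ Suc k"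
    by simp
  finally show ?thesis
    using hessian_approximation_Suc[OF approx] alpha_before alpha_k
    by (auto simp: linear_convergence_def less_Suc_eq)
qed

lemma linear_convergence: "linear_convergence k"
  by (induction k) (auto intro: linear_convergence_0 linear_convergence_Suc)

theorem sr1_correction_bounds:
  "loewner_le (J k) (Gt k) \<and> loewner_le (G k) ((3 * \<kappa>) *\<^sub>R H (x k))"
proof -
  have approx: "hessian_approximation k" and "P k \<le> 3"
    using linear_convergence[of k] P_le_3[of k] by (auto simp: linear_convergence_def)
  then show ?thesis
    using J_le_Gt G_le_H by (simp add: loewner_le_def)
qed

end

theorem corollary2:
  fixes f :: "real^'n \<Rightarrow> real" and g :: "real^'n \<Rightarrow> real^'n"
    and H :: "real^'n \<Rightarrow> real^'n^'n"
    and \<mu> L M :: real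
    and x :: "nat \<Rightarrow> real^'n" and G :: "nat \<Rightarrow> real^'n^'n"
  defines "\<kappa> \<equiv> L / \<mu>"
    and "u \<equiv> (\<lambda>k. x (Suc k) - x k)"
  defines "r \<equiv> (\<lambda>k. local_norm H (x k) (u k))"
  defines "Gt \<equiv> (\<lambda>k. ((1 + M * (if k = 0 then 0 else r (k - 1)) / 2) * (1 + M * r k / 2)) *\<^sub>R G k)"
    and "J \<equiv> (\<lambda>k. integral {0..1} (\<lambda>t. H (x k + t *\<^sub>R u k)))"
  assumes grad: "\<And>y. (f has_derivative (\<lambda>h. g y \<bullet> h)) (at y)"
    and hess: "\<And>y. (g has_derivative (\<lambda>h. H y *v h)) (at y)"
    and mu_pos: "0 < \<mu>" and mu_L: "\<mu> \<le> L"
    and bounds: "\<And>y. loewner_le (\<mu> *\<^sub>R mat 1) (H y) \<and> loewner_le (H y) (L *\<^sub>R mat 1)"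
    and M_nonneg: "0 \<le> M"
    and ssc: "strongly_self_concordant H M"
    and G0: "G 0 = L *\<^sub>R mat 1"
    and x_step: "\<And>k. x (Suc k) = x k - matrix_inv (G k) *v g (x k)"
    and G_step: "\<And>k. G (Suc k) = SR1 (J k) (Gt k) (u k)"
    and init: "M * newton_decrement g H (x 0) \<le> ln (3 / 2) / (4 * \<kappa>)"
  shows "\<forall>k. loewner_le (J k) (Gt k) \<and> loewner_le (G k) ((3 * \<kappa>) *\<^sub>R H (x k))"
proof -
  have symH: "\<And>y. transpose (H y) = H y"
    using hessian_symmetric[OF grad hess] .
  interpret sr1_correction g H \<mu> L M x G \<kappa> u r Gt J
    by unfold_locales
      (use symH hess mu_pos mu_L bounds M_nonneg ssc G0 x_step G_step init in
        \<open>simp_all add: \<kappa>_def u_def r_def Gt_def J_def\<close>)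
  show ?thesis
    using sr1_correction_bounds by blast
qed

end
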